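(* Let $K_{1,n-1}$ be the star graph with $n$ nodes, with the node of degree $n-1$ labeled $1$. Then the communicability angles satisfy $$\cos^2\theta_{1q}(K_{1,n-1})=\frac{\tanh^2(\sqrt{n-1})}{(n-2)\,\mathrm{sech}(\sqrt{n-1})+1}\quad\text{for } q\neq 1,$$ $$\cos\theta_{pq}(K_{1,n-1})=\frac{\cosh(\sqrt{n-1})-1}{\cosh(\sqrt{n-1})+n-2}\quad\text{for } p\neq1,\ q\neq1,\ p\neq q.$$
   Context: For a graph with adjacency matrix $A$, the communicability is $G_{pq}=(e^{A})_{pq}$ and the communicability angle $\theta_{pq}\in[0^\circ,90^\circ]$ between nodes $p,q$ is defined by $\cos\theta_{pq}=G_{pq}/\sqrt{G_{pp}G_{qq}}$. *)

theory Defs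
  imports "HOL-Analysis.Analysis"
begin

text \<open>Square matrices of size n are represented as functions nat => nat => real,
  with rows/columns indexed by {1..n}.\<close>

definition mat_mul :: "nat \<Rightarrow> (nat \<Rightarrow> nat \<Rightarrow> real) \<Rightarrow> (nat \<Rightarrow> nat \<Rightarrow> real) \<Rightarrow> (nat \<Rightarrow> nat \<Rightarrow> real)" where
  "mat_mul n A B = (\<lambda>i j. \<Sum>k=1..n. A i k * B k j)"

definition mat_id :: "nat \<Rightarrow> nat \<Rightarrow> real" where
  "mat_id = (\<lambda>i j. if i = j then 1 else 0)"

fun mat_pow :: "nat \<Rightarrow> (nat \<Rightarrow> nat \<Rightarrow> real) \<Rightarrow> nat \<Rightarrow> (nat \<Rightarrow> nat \<Rightarrow> real)" where
  "mat_pow n A 0 = mat_id"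
| "mat_pow n A (Suc k) = mat_mul n (mat_pow n A k) A"

definition communicability :: "nat \<Rightarrow> (nat \<Rightarrow> nat \<Rightarrow> real) \<Rightarrow> nat \<Rightarrow> nat \<Rightarrow> real" where
  "communicability n A p q = (\<Sum>k. mat_pow n A k p q / fact k)"

definition comm_angle :: "nat \<Rightarrow> (nat \<Rightarrow> nat \<Rightarrow> real) \<Rightarrow> nat \<Rightarrow> nat \<Rightarrow> real" where
  "comm_angle n A p q = arccos (communicability n A p q /
      sqrt (communicability n A p p * communicability n A q q))"

definition star_adj :: "nat \<Rightarrow> nat \<Rightarrow> real" where
  "star_adj i j = (if (i = 1 \<and> j \<noteq> 1) \<or> (j = 1 \<and> i \<noteq> 1) then 1 else 0)"


definition sech :: "real \<Rightarrow> real" where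
  "sech x = 1 / cosh x"

end

theory Submission imports Defs begin

text \<open>Write \<open>N = n - 1\<close> and \<open>s = sqrt N\<close>. The powers of the star's adjacency matrix have
  a closed form: \<open>(A^k)(1,1) = N^(k/2)\<close> for even \<open>k\<close>, \<open>(A^k)(1,q) = N^((k-1)/2)\<close> for odd \<open>k\<close>,
  and \<open>(A^k)(p,q) = N^(k/2 - 1)\<close> between leaves for even \<open>k > 0\<close>, all other entries vanishing.
  Summing the exponential series gives \<open>G(1,1) = cosh s\<close>, \<open>G(1,q) = sinh s / s\<close> and, between
  leaves, \<open>G(p,q) = (cosh s - 1) / s\<^sup>2 + \<delta>(p,q)\<close>; both angles are then a computation.\<close>

definition star_adj_pow :: "nat \<Rightarrow> nat \<Rightarrow> nat \<Rightarrow> nat \<Rightarrow> real" where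
  "star_adj_pow n k i j =
     (if i = 1 \<and> j = 1 then (if even k then (real n - 1) ^ (k div 2) else 0)
      else if i = 1 \<or> j = 1 then (if odd k then (real n - 1) ^ (k div 2) else 0)
      else if k = 0 then (if i = j then 1 else 0)
      else if even k then (real n - 1) ^ (k div 2 - 1) else 0)"

lemma real_sqrt_power_odd:
  assumes "odd k" "x \<ge> 0"
  shows "sqrt x ^ k = x ^ (k div 2) * sqrt x"
proof -
  from \<open>odd k\<close> obtain m where "k = Suc (2 * m)" by (auto elim!: oddE)
  with assms show ?thesis by (simp add: real_sqrt_power_even)
qed

lemma sum_star_adj_pow_leaves:
  assumes "n \<ge> 2" "i \<in> {1..n}"
  shows "(\<Sum>l=2..n. star_adj_pow n k i l) =
    (if i = 1 then (if odd k then (real n - 1) ^ (k div 2 + 1) else 0)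
     else if k = 0 then 1 else if even k then (real n - 1) ^ (k div 2) else 0)"
proof (cases "i = 1")
  case True
  then show ?thesis using assms by (simp add: star_adj_pow_def power_commutes of_nat_diff)
next
  case leaf: False
  show ?thesis
  proof (cases "k = 0")
    case True
    have "(\<Sum>l=2..n. star_adj_pow n k i l) = (\<Sum>l=2..n. if l = i then 1 else 0)"
      using leaf True by (intro sum.cong) (auto simp: star_adj_pow_def)
    then show ?thesis using assms leaf True by simp
  next
    case False
    have "(\<Sum>l=2..n. star_adj_pow n k i l) =
        (\<Sum>l=2..n. if even k then (real n - 1) ^ (k div 2 - 1) else 0)"
      using leaf False by (intro sum.cong) (auto simp: star_adj_pow_def)
    also have "\<dots> = (if even k then (real n - 1) ^ (k div 2) else 0)"
    proof -
      have "k div 2 = Suc (k div 2 - 1)" if "even k" using False that by auto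
      then have "even k \<Longrightarrow> (real n - 1) ^ (k div 2) = (real n - 1) * (real n - 1) ^ (k div 2 - 1)"
        by (simp only: power_Suc[symmetric])
      then show ?thesis using assms by (auto simp: of_nat_diff)
    qed
    finally show ?thesis using leaf False by simp
  qed
qed

lemma mat_pow_star_adj:
  assumes "n \<ge> 2" "i \<in> {1..n}" "j \<in> {1..n}"
  shows "mat_pow n star_adj k i j = star_adj_pow n k i j"
  using assms(3)
proof (induction k arbitrary: j)
  case 0
  then show ?case by (auto simp: star_adj_pow_def mat_id_def)
next
  case (Suc k)
  have "mat_pow n star_adj (Suc k) i j = (\<Sum>l=1..n. star_adj_pow n k i l * star_adj l j)"
    using Suc by (simp add: mat_mul_def)
  also have "\<dots> = (if j = 1 then (\<Sum>l=2..n. star_adj_pow n k i l) else star_adj_pow n k i 1)"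
  proof (cases "j = 1")
    case True
    have "{1..n} = insert 1 {2..n}" using assms by auto
    with True show ?thesis by (simp add: star_adj_def)
  next
    case False
    have "(\<Sum>l=1..n. star_adj_pow n k i l * star_adj l j) =
        (\<Sum>l=1..n. if l = 1 then star_adj_pow n k i l else 0)"
      using False by (intro sum.cong) (auto simp: star_adj_def)
    with False assms show ?thesis by simp
  qed
  also have "\<dots> = (if j = 1 then (if i = 1 then (if odd k then (real n - 1) ^ (k div 2 + 1) else 0)
      else if k = 0 then 1 else if even k then (real n - 1) ^ (k div 2) else 0)
      else star_adj_pow n k i 1)"
    by (simp only: sum_star_adj_pow_leaves[OF assms(1,2)])
  also have "\<dots> = star_adj_pow n (Suc k) i j"
    by (auto simp: star_adj_pow_def)
  finally show ?case .
qed

lemma communicability_star_centre: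
  assumes "n \<ge> 2"
  shows "communicability n star_adj 1 1 = cosh (sqrt (real n - 1))"
proof -
  have "(\<lambda>k. mat_pow n star_adj k 1 1 / fact k) =
      (\<lambda>k. if even k then sqrt (real n - 1) ^ k /\<^sub>R fact k else 0)"
    using assms
    by (auto simp: mat_pow_star_adj star_adj_pow_def real_sqrt_power_even divide_inverse_commute)
  then have "(\<lambda>k. mat_pow n star_adj k 1 1 / fact k) sums cosh (sqrt (real n - 1))"
    using cosh_converges by simp
  then show ?thesis unfolding communicability_def by (rule sums_unique[symmetric])
qed

lemma communicability_star_centre_leaf:
  assumes "n \<ge> 2" "q \<in> {2..n}"
  shows "communicability n star_adj 1 q = sinh (sqrt (real n - 1)) / sqrt (real n - 1)"
proof -
  have "sqrt (real n - 1) > 0" using assms by simp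
  then have "(\<lambda>k. mat_pow n star_adj k 1 q / fact k) =
      (\<lambda>k. (if even k then 0 else sqrt (real n - 1) ^ k /\<^sub>R fact k) / sqrt (real n - 1))"
    using assms
    by (auto simp: mat_pow_star_adj star_adj_pow_def real_sqrt_power_odd divide_inverse_commute)
  then have "(\<lambda>k. mat_pow n star_adj k 1 q / fact k) sums
      (sinh (sqrt (real n - 1)) / sqrt (real n - 1))"
    using sums_divide[OF sinh_converges] by simp
  then show ?thesis unfolding communicability_def by (rule sums_unique[symmetric])
qed

lemma communicability_star_leaves:
  assumes "n \<ge> 2" "p \<in> {2..n}" "q \<in> {2..n}"
  shows "communicability n star_adj p q =
    (cosh (sqrt (real n - 1)) - 1) / (real n - 1) + (if p = q then 1 else 0)"
proof -
  define N where "N = real n - 1"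
  define \<delta> :: real where "\<delta> = (if p = q then 1 else 0)"
  have "N > 0" using assms by (simp add: N_def)
  \<comment> \<open>the terms are those of \<open>cosh (sqrt N) / N\<close> except at \<open>k = 0\<close>, where \<open>A^0\<close> is the identity\<close>
  have terms: "mat_pow n star_adj k p q / fact k =
      (if even k then sqrt N ^ k /\<^sub>R fact k else 0) / N + (if k = 0 then \<delta> - 1 / N else 0)" for k
  proof (cases "even k \<and> k \<noteq> 0")
    case True
    then have "k div 2 = Suc (k div 2 - 1)" by auto
    then have "sqrt N ^ k = N * N ^ (k div 2 - 1)"
      using True \<open>N > 0\<close> by (metis real_sqrt_power_even less_imp_le power_Suc)
    then show ?thesis
      using assms True \<open>N > 0\<close>
      by (simp add: mat_pow_star_adj star_adj_pow_def N_def divide_inverse_commute)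
  next
    case False
    then show ?thesis
      using assms by (auto simp: mat_pow_star_adj star_adj_pow_def mat_id_def \<delta>_def)
  qed
  have "(\<lambda>k. mat_pow n star_adj k p q / fact k) sums (cosh (sqrt N) / N + (\<delta> - 1 / N))"
    unfolding terms by (intro sums_add sums_divide cosh_converges sums_single)
  moreover have "cosh (sqrt N) / N + (\<delta> - 1 / N) = (cosh (sqrt N) - 1) / N + \<delta>"
    by (simp add: diff_divide_distrib)
  ultimately show ?thesis
    unfolding communicability_def N_def \<delta>_def by (simp add: sums_iff)
qed

lemma cos_comm_angle:
  assumes "\<bar>communicability n A p q / sqrt (communicability n A p p * communicability n A q q)\<bar> \<le> 1"
  shows "cos (comm_angle n A p q) =
    communicability n A p q / sqrt (communicability n A p p * communicability n A q q)"
  using assms unfolding comm_angle_def by (rule cos_arccos_abs)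

lemma cos_comm_angle_star_centre_leaf:
  assumes "n \<ge> 2" "q \<in> {2..n}"
  shows "(cos (comm_angle n star_adj 1 q))\<^sup>2 =
    (tanh (sqrt (real n - 1)))\<^sup>2 / ((real n - 2) * sech (sqrt (real n - 1)) + 1)"
proof -
  define s where "s = sqrt (real n - 1)"
  have "s > 0" and N: "real n - 1 = s\<^sup>2" using assms by (simp_all add: s_def)
  have "cosh s \<ge> 1" by (rule cosh_real_ge_1)
  have pos: "cosh s * (cosh s + real n - 2) > 0" using \<open>cosh s \<ge> 1\<close> assms by simp
  have "communicability n star_adj q q = (cosh s - 1) / s\<^sup>2 + s\<^sup>2 / s\<^sup>2"
    using communicability_star_leaves[OF assms(1,2,2)] assms by (simp add: s_def)
  also have "\<dots> = (cosh s + real n - 2) / s\<^sup>2"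
    unfolding add_divide_distrib[symmetric] N[symmetric] by simp
  finally have Gqq: "communicability n star_adj q q = (cosh s + real n - 2) / s\<^sup>2" .
  have "sqrt (cosh s * ((cosh s + real n - 2) / s\<^sup>2)) = sqrt (cosh s * (cosh s + real n - 2)) / s"
    using \<open>s > 0\<close> by (simp add: real_sqrt_divide)
  then have ratio: "communicability n star_adj 1 q /
      sqrt (communicability n star_adj 1 1 * communicability n star_adj q q) =
      sinh s / sqrt (cosh s * (cosh s + real n - 2))"
    using communicability_star_centre[OF assms(1)] communicability_star_centre_leaf[OF assms]
      Gqq \<open>s > 0\<close> by (simp add: s_def[symmetric])
  \<comment> \<open>the ratio is at most one since \<open>sinh\<^sup>2 s < cosh\<^sup>2 s \<le> cosh s (cosh s + n - 2)\<close>\<close>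
  have "cosh s * cosh s \<le> cosh s * (cosh s + real n - 2)"
    using \<open>cosh s \<ge> 1\<close> assms by (intro mult_left_mono) auto
  then have "(sinh s)\<^sup>2 \<le> cosh s * (cosh s + real n - 2)"
    using cosh_square_eq[of s] unfolding power2_eq_square by linarith
  then have "(sinh s / sqrt (cosh s * (cosh s + real n - 2)))\<^sup>2 \<le> 1"
    using pos by (simp add: power_divide)
  then have "\<bar>sinh s / sqrt (cosh s * (cosh s + real n - 2))\<bar> \<le> 1"
    by (simp only: abs_square_le_1)
  then have "cos (comm_angle n star_adj 1 q) = sinh s / sqrt (cosh s * (cosh s + real n - 2))"
    by (rule cos_comm_angle[of n star_adj 1 q, unfolded ratio])
  then have "(cos (comm_angle n star_adj 1 q))\<^sup>2 = (sinh s)\<^sup>2 / (cosh s * (cosh s + real n - 2))"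
    using pos by (simp add: power_divide)
  also have "\<dots> = (tanh s)\<^sup>2 / ((real n - 2) * sech s + 1)"
    using \<open>cosh s \<ge> 1\<close> pos
    by (simp add: tanh_def sech_def power_divide field_simps power2_eq_square)
  finally show ?thesis by (simp add: s_def)
qed

lemma cos_comm_angle_star_leaves:
  assumes "n \<ge> 2" "p \<in> {2..n}" "q \<in> {2..n}" "p \<noteq> q"
  shows "cos (comm_angle n star_adj p q) =
    (cosh (sqrt (real n - 1)) - 1) / (cosh (sqrt (real n - 1)) + real n - 2)"
proof -
  define c where "c = cosh (sqrt (real n - 1))"
  have "c \<ge> 1" by (simp add: c_def cosh_real_ge_1)
  have "real n - 1 > 0" using assms by simp
  define D where "D = (c + real n - 2) / (real n - 1)"
  have "D > 0" using \<open>c \<ge> 1\<close> \<open>real n - 1 > 0\<close> assms by (simp add: D_def)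
  have diag: "communicability n star_adj r r = D" if "r \<in> {2..n}" for r
    using communicability_star_leaves[OF assms(1) that that] \<open>real n - 1 > 0\<close>
    by (simp add: c_def D_def field_simps)
  have "communicability n star_adj p q = (c - 1) / (real n - 1)"
    using communicability_star_leaves[OF assms(1-3)] assms by (simp add: c_def)
  then have "communicability n star_adj p q /
      sqrt (communicability n star_adj p p * communicability n star_adj q q) =
      ((c - 1) / (real n - 1)) / D"
    using diag[OF assms(2)] diag[OF assms(3)] \<open>D > 0\<close> by (simp add: real_sqrt_mult_self)
  also have "\<dots> = (c - 1) / (c + real n - 2)" using \<open>real n - 1 > 0\<close> by (simp add: D_def)
  finally have ratio: "communicability n star_adj p q /
      sqrt (communicability n star_adj p p * communicability n star_adj q q) =
      (c - 1) / (c + real n - 2)" .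
  have "\<bar>(c - 1) / (c + real n - 2)\<bar> \<le> 1" using \<open>c \<ge> 1\<close> assms by simp
  then have "cos (comm_angle n star_adj p q) = (c - 1) / (c + real n - 2)"
    by (rule cos_comm_angle[of n star_adj p q, unfolded ratio])
  then show ?thesis by (simp only: c_def)
qed

theorem proposition4p3:
  fixes n :: nat
  assumes "n \<ge> 2"
  shows "(\<forall>q\<in>{2..n}. (cos (comm_angle n star_adj 1 q))^2 =
            (tanh (sqrt (real n - 1)))^2 / ((real n - 2) * sech (sqrt (real n - 1)) + 1)) \<and>
         (\<forall>p\<in>{2..n}. \<forall>q\<in>{2..n}. p \<noteq> q \<longrightarrow>
            cos (comm_angle n star_adj p q) =
            (cosh (sqrt (real n - 1)) - 1) / (cosh (sqrt (real n - 1)) + real n - 2))"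
  using cos_comm_angle_star_centre_leaf[OF assms] cos_comm_angle_star_leaves[OF assms] by blast

end
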